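(* Let $X$ be a compact metric space with metric $d$, let $f:X\to X$ be continuous, and let $A\subset X$. If $A$ is a uniformly chaotic set, then there exists a strictly increasing sequence $Q$ of positive integers such that $A$ is a distributional chaotic set in the sequence $Q$.
   Context: A set $B\subset X$ is uniformly proximal if for every $\epsilon>0$ there is $k\in\mathbb N$ with $d(f^k x,f^k y)<\epsilon$ for all $x,y\in B$; it is uniformly rigid if for every $\epsilon>0$ there is $k\in\mathbb N$ with $d(f^k x,x)<\epsilon$ for all $x\in B$. $A$ is uniformly chaotic if there are Cantor sets (subsets homeomorphic to the Cantor ternary set) $C_1\subset C_2\subset\cdots$ with $A=\bigcup_i C_i$ and each $C_i$ both uniformly proximal and uniformly rigid. For a strictly increasing sequence $Q=\{m_i\}$ of positive integers, $x,y\in X$, $t>0$, $n\ge1$, put $\Phi^n_{(xy,Q)}(t)=\frac1n\#\{1\le i\le n: d(f^{m_i}(x),f^{m_i}(y))\le t\}$, $\Phi_{(xy,Q)}(t)=\liminf_n\Phi^n_{(xy,Q)}(t)$, $\Phi^\star_{(xy,Q)}(t)=\limsup_n\Phi^n_{(xy,Q)}(t)$. A pair $(x,y)$ is a distributional scrambled pair in $Q$ if $\Phi^\star_{(xy,Q)}(t)=1$ for all $t>0$ and $\Phi_{(xy,Q)}(s)=0$ for some $s>0$. $A$ is a distributional chaotic set in $Q$ if every pair $(x,y)\in A\times A$ with $x\ne y$ is a distributional scrambled pair in $Q$. *)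

theory Defs
  imports "HOL-Analysis.Analysis" "HOL-Library.Liminf_Limsup"
begin

definition cantor_ternary :: "real set" where
  "cantor_ternary = {x. \<exists>b :: nat \<Rightarrow> bool. x = (\<Sum>n. (if b n then 2 else 0) / 3 ^ Suc n)}"

definition is_cantor_set :: "'a::topological_space set \<Rightarrow> bool" where
  "is_cantor_set C \<longleftrightarrow> C homeomorphic cantor_ternary"

definition uniformly_proximal :: "('a::metric_space \<Rightarrow> 'a) \<Rightarrow> 'a set \<Rightarrow> bool" where
  "uniformly_proximal f B \<longleftrightarrow>
     (\<forall>\<epsilon>>0. \<exists>k::nat. k \<ge> 1 \<and> (\<forall>x\<in>B. \<forall>y\<in>B. dist ((f ^^ k) x) ((f ^^ k) y) < \<epsilon>))"

definition uniformly_rigid :: "('a::metric_space \<Rightarrow> 'a) \<Rightarrow> 'a set \<Rightarrow> bool" where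
  "uniformly_rigid f B \<longleftrightarrow>
     (\<forall>\<epsilon>>0. \<exists>k::nat. k \<ge> 1 \<and> (\<forall>x\<in>B. dist ((f ^^ k) x) x < \<epsilon>))"

definition uniformly_chaotic :: "('a::metric_space \<Rightarrow> 'a) \<Rightarrow> 'a set \<Rightarrow> bool" where
  "uniformly_chaotic f A \<longleftrightarrow>
     (\<exists>C :: nat \<Rightarrow> 'a set. (\<forall>i. C i \<subseteq> C (Suc i)) \<and> A = (\<Union>i. C i) \<and>
        (\<forall>i. is_cantor_set (C i) \<and> uniformly_proximal f (C i) \<and> uniformly_rigid f (C i)))"

text \<open>Sequence Q = {m_1 < m_2 < ...} is represented by Q :: nat => nat with m_(i+1) = Q i.
  Phi_n(t) = (1/n) #{1 <= i <= n. d(f^(m_i) x, f^(m_i) y) <= t}.\<close>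
definition Phi_n :: "('a::metric_space \<Rightarrow> 'a) \<Rightarrow> (nat \<Rightarrow> nat) \<Rightarrow> 'a \<Rightarrow> 'a \<Rightarrow> real \<Rightarrow> nat \<Rightarrow> real" where
  "Phi_n f Q x y t n =
     real (card {i \<in> {..<n}. dist ((f ^^ Q i) x) ((f ^^ Q i) y) \<le> t}) / real n"

definition Phi_lower :: "('a::metric_space \<Rightarrow> 'a) \<Rightarrow> (nat \<Rightarrow> nat) \<Rightarrow> 'a \<Rightarrow> 'a \<Rightarrow> real \<Rightarrow> ereal" where
  "Phi_lower f Q x y t = liminf (\<lambda>n. ereal (Phi_n f Q x y t n))"

definition Phi_upper :: "('a::metric_space \<Rightarrow> 'a) \<Rightarrow> (nat \<Rightarrow> nat) \<Rightarrow> 'a \<Rightarrow> 'a \<Rightarrow> real \<Rightarrow> ereal" where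
  "Phi_upper f Q x y t = limsup (\<lambda>n. ereal (Phi_n f Q x y t n))"

definition distributional_scrambled_pair ::
  "('a::metric_space \<Rightarrow> 'a) \<Rightarrow> (nat \<Rightarrow> nat) \<Rightarrow> 'a \<Rightarrow> 'a \<Rightarrow> bool" where
  "distributional_scrambled_pair f Q x y \<longleftrightarrow>
     (\<forall>t>0. Phi_upper f Q x y t = 1) \<and> (\<exists>s>0. Phi_lower f Q x y s = 0)"

definition distributional_chaotic_set ::
  "('a::metric_space \<Rightarrow> 'a) \<Rightarrow> (nat \<Rightarrow> nat) \<Rightarrow> 'a set \<Rightarrow> bool" where
  "distributional_chaotic_set f Q A \<longleftrightarrow>
     (\<forall>x\<in>A. \<forall>y\<in>A. x \<noteq> y \<longrightarrow> distributional_scrambled_pair f Q x y)"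

end

theory Submission
  imports Defs
begin

text \<open>Cut the indices into consecutive blocks [j * j!, (j+1) * (j+1)!), each much longer than
  everything before it. Uniform proximality and uniform rigidity of the Cantor set C j hold at
  arbitrarily large times, so Q can be chosen strictly increasing such that on even blocks the
  iterate f^(Q i) shrinks C j to diameter below 1/(j+1), and on odd blocks it moves every point of
  C j by less than 1/(j+1). Distinct x, y in A both lie in C j for all large j. At the end of a late
  even block almost all times so far see x and y close, so the upper density is 1; at the end of a
  late odd block almost all times see them at distance more than d(x,y)/2, so the lower density at
  s = d(x,y)/2 is 0.\<close>

lemma arbitrarily_large_good_times:
  fixes D :: "nat \<Rightarrow> 'b \<Rightarrow> real"
  assumes small: "\<And>e. e > 0 \<Longrightarrow> \<exists>k\<ge>1. \<forall>p\<in>S. D k p < e"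
    and nonneg: "\<And>k p. 0 \<le> D k p"
    and exact: "\<And>k M. k \<ge> 1 \<Longrightarrow> \<forall>p\<in>S. D k p = 0 \<Longrightarrow> \<exists>m>M. \<forall>p\<in>S. D m p = 0"
    and "e > 0"
  shows "\<exists>m>M. \<forall>p\<in>S. D m p < e"
proof (cases "\<exists>k\<ge>1. \<forall>p\<in>S. D k p = 0")
  case True
  then show ?thesis using exact \<open>e > 0\<close> by fastforce
next
  case False
  then obtain w where w: "\<And>k. k \<ge> 1 \<Longrightarrow> w k \<in> S \<and> 0 < D k (w k)"
    using nonneg by (metis order_neq_le_trans)
  \<comment> \<open>No time is exact, so a threshold below D k (w k) for all k \<le> M rules out every k \<le> M.\<close>
  define e' where "e' = Min (insert e ((\<lambda>k. D k (w k)) ` {1..M}))"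
  have "e' > 0" unfolding e'_def using \<open>e > 0\<close> w by (subst Min_gr_iff) auto
  then obtain k where k: "k \<ge> 1" "\<forall>p\<in>S. D k p < e'" using small by blast
  have "M < k"
  proof (rule ccontr)
    assume "\<not> M < k"
    then have "e' \<le> D k (w k)" unfolding e'_def using k(1) by (intro Min_le) auto
    then show False using k w by fastforce
  qed
  moreover have "e' \<le> e" unfolding e'_def by simp
  ultimately show ?thesis using k by force
qed

lemma uniformly_rigid_arbitrarily_large_times:
  assumes "uniformly_rigid f C" "e > 0"
  shows "\<exists>m>M. \<forall>z\<in>C. dist ((f ^^ m) z) z < e"
proof (rule arbitrarily_large_good_times[where D = "\<lambda>k z. dist ((f ^^ k) z) z", OF _ _ _ \<open>e > 0\<close>])
  show "\<And>e. 0 < e \<Longrightarrow> \<exists>k\<ge>1. \<forall>z\<in>C. dist ((f ^^ k) z) z < e"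
    using assms(1) unfolding uniformly_rigid_def by blast
next
  fix k M :: nat assume "k \<ge> 1" and fixed: "\<forall>z\<in>C. dist ((f ^^ k) z) z = 0"
  have "(f ^^ (k * n)) z = z" if "z \<in> C" for z n
    using fixed that by (induction n) (simp_all add: funpow_add)
  moreover have "M < k * Suc M"
    using mult_le_mono1[OF \<open>k \<ge> 1\<close>, of "Suc M"] by simp
  ultimately show "\<exists>m>M. \<forall>z\<in>C. dist ((f ^^ m) z) z = 0"
    by (auto simp del: mult_Suc_right)
qed simp

lemma uniformly_proximal_arbitrarily_large_times:
  assumes "uniformly_proximal f C" "e > 0"
  shows "\<exists>m>M. \<forall>x\<in>C. \<forall>y\<in>C. dist ((f ^^ m) x) ((f ^^ m) y) < e"
proof -
  have "\<exists>m>M. \<forall>p\<in>C \<times> C. dist ((f ^^ m) (fst p)) ((f ^^ m) (snd p)) < e"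
  proof (rule arbitrarily_large_good_times[where D = "\<lambda>k p. dist ((f ^^ k) (fst p)) ((f ^^ k) (snd p))",
        OF _ _ _ \<open>e > 0\<close>])
    show "\<And>e. 0 < e \<Longrightarrow> \<exists>k\<ge>1. \<forall>p\<in>C \<times> C. dist ((f ^^ k) (fst p)) ((f ^^ k) (snd p)) < e"
      using assms(1) unfolding uniformly_proximal_def by fastforce
  next
    fix k M :: nat assume "k \<ge> 1" and collapsed: "\<forall>p\<in>C \<times> C. dist ((f ^^ k) (fst p)) ((f ^^ k) (snd p)) = 0"
    have "dist ((f ^^ (M + k)) (fst p)) ((f ^^ (M + k)) (snd p)) = 0" if "p \<in> C \<times> C" for p
    proof -
      have "(f ^^ k) (fst p) = (f ^^ k) (snd p)" using collapsed[rule_format, OF that] by simp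
      then show ?thesis by (simp add: funpow_add)
    qed
    then show "\<exists>m>M. \<forall>p\<in>C \<times> C. dist ((f ^^ m) (fst p)) ((f ^^ m) (snd p)) = 0"
      using \<open>k \<ge> 1\<close> by (intro exI[of _ "M + k"]) simp
  qed simp
  then show ?thesis by (metis mem_Sigma_iff fst_conv snd_conv)
qed

lemma strict_mono_sequence_in_blocks:
  fixes T :: "nat \<Rightarrow> nat" and P :: "nat \<Rightarrow> nat \<Rightarrow> bool"
  assumes "strict_mono T" and large: "\<And>j M. \<exists>m>M. P j m"
  shows "\<exists>Q. strict_mono Q \<and> (\<forall>i. 0 < Q i) \<and> (\<forall>j i. T j \<le> i \<longrightarrow> i < T (Suc j) \<longrightarrow> P j (Q i))"
proof -
  define R where "R i m \<longleftrightarrow> (\<forall>j. T j \<le> i \<longrightarrow> i < T (Suc j) \<longrightarrow> P j m)" for i m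
  have block_unique: "j' = j" if "T j \<le> i" "i < T (Suc j)" "T j' \<le> i" "i < T (Suc j')" for i j j'
  proof -
    have "T (Suc j) \<le> T j'" if "Suc j \<le> j'" for j j'
      using that strict_mono_less_eq[OF \<open>strict_mono T\<close>] by blast
    then have "\<not> Suc j \<le> j'" "\<not> Suc j' \<le> j"
      using that by (meson le_less_trans not_le)+
    then show ?thesis by linarith
  qed
  have large_R: "\<exists>m>M. R i m" for i M
  proof (cases "\<exists>j. T j \<le> i \<and> i < T (Suc j)")
    case True
    then obtain j where j: "T j \<le> i" "i < T (Suc j)" by blast
    obtain m where "M < m" "P j m" using large by blast
    moreover have "P j' m" if "T j' \<le> i" "i < T (Suc j')" for j'
      using block_unique[OF j that] \<open>P j m\<close> by simp
    ultimately show ?thesis unfolding R_def by blast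
  next
    case False
    then have "R i (Suc M)" unfolding R_def by blast
    then show ?thesis by blast
  qed
  have "\<exists>Q. \<forall>n. (0 < Q n \<and> R n (Q n)) \<and> Q n < Q (Suc n)"
  proof (rule dependent_nat_choice)
    show "\<exists>m. 0 < m \<and> R 0 m" using large_R by blast
    show "\<exists>m'. (0 < m' \<and> R (Suc n) m') \<and> m < m'" if "0 < m \<and> R n m" for m n
    proof -
      obtain m' where "m < m'" "R (Suc n) m'" using large_R by blast
      then show ?thesis using that by (intro exI[of _ m']) auto
    qed
  qed
  then obtain Q where "\<And>n. 0 < Q n" "\<And>n. R n (Q n)" "\<And>n. Q n < Q (Suc n)" by blast
  then show ?thesis unfolding R_def strict_mono_Suc_iff by blast
qed

lemma limsup_eq_1_if_frequently_near_1:
  fixes u :: "nat \<Rightarrow> real"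
  assumes le1: "\<And>n. u n \<le> 1" and near: "\<And>r N. r < 1 \<Longrightarrow> \<exists>n\<ge>N. r \<le> u n"
  shows "limsup (\<lambda>n. ereal (u n)) = 1"
proof (rule antisym)
  show "limsup (\<lambda>n. ereal (u n)) \<le> 1"
    by (rule Limsup_bounded) (simp add: le1)
  show "1 \<le> limsup (\<lambda>n. ereal (u n))"
  proof (rule ccontr)
    assume "\<not> 1 \<le> limsup (\<lambda>n. ereal (u n))"
    then obtain r where "limsup (\<lambda>n. ereal (u n)) < ereal r" "r < 1"
      using ereal_dense2 by (metis ereal_less(3) not_le)
    then have "\<forall>\<^sub>F n in sequentially. ereal (u n) < ereal r"
      using Limsup_le_iff[where F = sequentially] by (metis order.refl)
    then obtain N where "\<And>n. N \<le> n \<Longrightarrow> u n < r"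
      by (auto simp: eventually_sequentially)
    with near[OF \<open>r < 1\<close>, of N] show False by force
  qed
qed

lemma liminf_eq_0_if_frequently_near_0:
  fixes u :: "nat \<Rightarrow> real"
  assumes ge0: "\<And>n. 0 \<le> u n" and near: "\<And>r N. 0 < r \<Longrightarrow> \<exists>n\<ge>N. u n \<le> r"
  shows "liminf (\<lambda>n. ereal (u n)) = 0"
proof (rule antisym)
  show "0 \<le> liminf (\<lambda>n. ereal (u n))"
    by (rule Liminf_bounded) (simp add: ge0)
  show "liminf (\<lambda>n. ereal (u n)) \<le> 0"
  proof (rule ccontr)
    assume "\<not> liminf (\<lambda>n. ereal (u n)) \<le> 0"
    then obtain r where "ereal r < liminf (\<lambda>n. ereal (u n))" "0 < r"
      using ereal_dense2 by (metis ereal_less(2) not_le)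
    then have "\<forall>\<^sub>F n in sequentially. ereal r < ereal (u n)"
      using le_Liminf_iff[where F = sequentially] by (metis order.refl)
    then obtain N where "\<And>n. N \<le> n \<Longrightarrow> r < u n"
      by (auto simp: eventually_sequentially)
    with near[OF \<open>0 < r\<close>, of N] show False by force
  qed
qed

lemma Phi_n_le_1: "Phi_n f Q x y t n \<le> 1"
proof -
  have "card {i \<in> {..<n}. dist ((f ^^ Q i) x) ((f ^^ Q i) y) \<le> t} \<le> card {..<n}"
    by (rule card_mono) auto
  then show ?thesis unfolding Phi_n_def by (cases "n = 0") auto
qed

lemma Phi_n_ge_if_close_on_final_segment:
  assumes "a \<le> n" "0 < n"
    and close: "\<And>i. a \<le> i \<Longrightarrow> i < n \<Longrightarrow> dist ((f ^^ Q i) x) ((f ^^ Q i) y) \<le> t"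
  shows "1 - real a / real n \<le> Phi_n f Q x y t n"
proof -
  have "{a..<n} \<subseteq> {i \<in> {..<n}. dist ((f ^^ Q i) x) ((f ^^ Q i) y) \<le> t}"
    using close by auto
  then have "card {a..<n} \<le> card {i \<in> {..<n}. dist ((f ^^ Q i) x) ((f ^^ Q i) y) \<le> t}"
    by (rule card_mono[rotated]) simp
  then have "real n - real a \<le> real (card {i \<in> {..<n}. dist ((f ^^ Q i) x) ((f ^^ Q i) y) \<le> t})"
    using \<open>a \<le> n\<close> by simp
  then have "(real n - real a) / real n \<le> Phi_n f Q x y t n"
    unfolding Phi_n_def by (rule divide_right_mono) simp
  then show ?thesis using \<open>0 < n\<close> by (simp add: diff_divide_distrib)
qed

lemma Phi_n_le_if_far_on_final_segment:
  assumes far: "\<And>i. a \<le> i \<Longrightarrow> i < n \<Longrightarrow> t < dist ((f ^^ Q i) x) ((f ^^ Q i) y)"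
  shows "Phi_n f Q x y t n \<le> real a / real n"
proof -
  have "{i \<in> {..<n}. dist ((f ^^ Q i) x) ((f ^^ Q i) y) \<le> t} \<subseteq> {..<a}"
  proof
    fix i assume "i \<in> {i \<in> {..<n}. dist ((f ^^ Q i) x) ((f ^^ Q i) y) \<le> t}"
    then show "i \<in> {..<a}" using far[of i] by fastforce
  qed
  then have "card {i \<in> {..<n}. dist ((f ^^ Q i) x) ((f ^^ Q i) y) \<le> t} \<le> card {..<a}"
    by (rule card_mono[rotated]) simp
  then show ?thesis unfolding Phi_n_def by (simp add: divide_right_mono)
qed

text \<open>Block j consists of the indices in [block_start j, block_start (Suc j)); it makes up a
  fraction at least j/(j+1) of all indices below its end.\<close>
definition block_start :: "nat \<Rightarrow> nat" where
  "block_start j = j * fact j"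

lemma strict_mono_block_start: "strict_mono block_start"
proof (rule strict_monoI_Suc)
  fix j
  have "(1::nat) \<le> fact j" by (simp add: Suc_leI)
  then show "block_start j < block_start (Suc j)" by (simp add: block_start_def algebra_simps)
qed

lemma block_start_ratio: "real (block_start j) / real (block_start (Suc j)) \<le> 1 / (real j + 1)"
proof -
  have "block_start j * (j + 1) \<le> block_start (Suc j)" by (simp add: block_start_def algebra_simps)
  then have "real (block_start j) * (real j + 1) \<le> real (block_start (Suc j))"
    by (metis of_nat_1 of_nat_add of_nat_le_iff of_nat_mult)
  moreover have "0 < block_start (Suc j)" by (simp add: block_start_def)
  ultimately show ?thesis by (simp add: field_simps)
qed

lemma eventually_inverse_Suc_less:
  assumes "0 < e" shows "\<exists>K. \<forall>j\<ge>K. 1 / (real j + 1) < e"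
proof -
  obtain K where "inverse (real (Suc K)) < e" using reals_Archimedean[OF assms] by blast
  moreover have "1 / (real j + 1) \<le> inverse (real (Suc K))" if "K \<le> j" for j
    using that by (simp add: field_simps)
  ultimately show ?thesis by (meson le_less_trans)
qed

lemma Phi_upper_eq_1_if_proximal_on_even_blocks:
  assumes proximal: "\<And>j i. j0 \<le> j \<Longrightarrow> even j \<Longrightarrow> block_start j \<le> i \<Longrightarrow> i < block_start (Suc j) \<Longrightarrow>
      dist ((f ^^ Q i) x) ((f ^^ Q i) y) < 1 / (real j + 1)"
    and "0 < t"
  shows "Phi_upper f Q x y t = 1"
  unfolding Phi_upper_def
proof (rule limsup_eq_1_if_frequently_near_1[OF Phi_n_le_1])
  fix r :: real and N :: nat assume "r < 1"
  then obtain K where K: "\<And>j. K \<le> j \<Longrightarrow> 1 / (real j + 1) < min t (1 - r)"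
    using eventually_inverse_Suc_less[of "min t (1 - r)"] \<open>0 < t\<close> by auto
  define j where "j = 2 * (K + j0 + N)"
  define n where "n = block_start (Suc j)"
  have "N \<le> Suc j" unfolding j_def by simp
  also have "Suc j \<le> n" unfolding n_def by (rule strict_mono_imp_increasing[OF strict_mono_block_start])
  finally have "N \<le> n" .
  have "1 - real (block_start j) / real n \<le> Phi_n f Q x y t n"
  proof (rule Phi_n_ge_if_close_on_final_segment)
    show "block_start j \<le> n" "0 < n"
      using strict_monoD[OF strict_mono_block_start, of j "Suc j"] unfolding n_def by simp_all
    show "dist ((f ^^ Q i) x) ((f ^^ Q i) y) \<le> t" if "block_start j \<le> i" "i < n" for i
      using proximal[OF _ _ that[unfolded n_def]] K[of j] unfolding j_def by fastforce
  qed
  moreover have "r \<le> 1 - real (block_start j) / real n"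
    using block_start_ratio[of j] K[of j] unfolding n_def j_def by fastforce
  ultimately show "\<exists>n\<ge>N. r \<le> Phi_n f Q x y t n" using \<open>N \<le> n\<close> by force
qed

lemma Phi_lower_eq_0_if_rigid_on_odd_blocks:
  assumes rigid: "\<And>j i. j0 \<le> j \<Longrightarrow> odd j \<Longrightarrow> block_start j \<le> i \<Longrightarrow> i < block_start (Suc j) \<Longrightarrow>
      dist ((f ^^ Q i) x) x < 1 / (real j + 1) \<and> dist ((f ^^ Q i) y) y < 1 / (real j + 1)"
    and "x \<noteq> y"
  shows "Phi_lower f Q x y (dist x y / 2) = 0"
  unfolding Phi_lower_def
proof (rule liminf_eq_0_if_frequently_near_0)
  fix r :: real and N :: nat assume "0 < r"
  then obtain K where K: "\<And>j. K \<le> j \<Longrightarrow> 1 / (real j + 1) < min r (dist x y / 4)"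
    using eventually_inverse_Suc_less[of "min r (dist x y / 4)"] \<open>x \<noteq> y\<close> by auto
  define j where "j = 2 * (K + j0 + N) + 1"
  define n where "n = block_start (Suc j)"
  have "N \<le> Suc j" unfolding j_def by simp
  also have "Suc j \<le> n" unfolding n_def by (rule strict_mono_imp_increasing[OF strict_mono_block_start])
  finally have "N \<le> n" .
  have "Phi_n f Q x y (dist x y / 2) n \<le> real (block_start j) / real n"
  proof (rule Phi_n_le_if_far_on_final_segment)
    fix i assume "block_start j \<le> i" "i < n"
    then have "dist ((f ^^ Q i) x) x < dist x y / 4" "dist ((f ^^ Q i) y) y < dist x y / 4"
      using rigid[of j i] K[of j] unfolding n_def j_def by fastforce+
    then show "dist x y / 2 < dist ((f ^^ Q i) x) ((f ^^ Q i) y)"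
      using dist_triangle[of x y "(f ^^ Q i) x"] dist_triangle[of "(f ^^ Q i) x" y "(f ^^ Q i) y"]
        dist_commute[of x "(f ^^ Q i) x"] by linarith
  qed
  also have "\<dots> \<le> r"
    using block_start_ratio[of j] K[of j] unfolding n_def j_def by fastforce
  finally show "\<exists>n\<ge>N. Phi_n f Q x y (dist x y / 2) n \<le> r" using \<open>N \<le> n\<close> by blast
qed (simp add: Phi_n_def)

lemma distributional_scrambled_pair_if_blockwise_proximal_rigid:
  assumes proximal: "\<And>j i. j0 \<le> j \<Longrightarrow> even j \<Longrightarrow> block_start j \<le> i \<Longrightarrow> i < block_start (Suc j) \<Longrightarrow>
      dist ((f ^^ Q i) x) ((f ^^ Q i) y) < 1 / (real j + 1)"
    and rigid: "\<And>j i. j0 \<le> j \<Longrightarrow> odd j \<Longrightarrow> block_start j \<le> i \<Longrightarrow> i < block_start (Suc j) \<Longrightarrow>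
      dist ((f ^^ Q i) x) x < 1 / (real j + 1) \<and> dist ((f ^^ Q i) y) y < 1 / (real j + 1)"
    and "x \<noteq> y"
  shows "distributional_scrambled_pair f Q x y"
proof -
  have "Phi_upper f Q x y t = 1" if "0 < t" for t
    by (rule Phi_upper_eq_1_if_proximal_on_even_blocks[OF proximal that])
  moreover have "Phi_lower f Q x y (dist x y / 2) = 0"
    by (rule Phi_lower_eq_0_if_rigid_on_odd_blocks[OF rigid \<open>x \<noteq> y\<close>])
  moreover have "0 < dist x y / 2" using \<open>x \<noteq> y\<close> by simp
  ultimately show ?thesis unfolding distributional_scrambled_pair_def by blast
qed

lemma uniformly_chaotic_blockwise_sequence:
  assumes "uniformly_chaotic f A"
  obtains C :: "nat \<Rightarrow> 'a::metric_space set" and Q :: "nat \<Rightarrow> nat"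
  where "\<And>i. C i \<subseteq> C (Suc i)" "A = (\<Union>i. C i)" "strict_mono Q" "\<forall>i. 0 < Q i"
    "\<And>j i x y. block_start j \<le> i \<Longrightarrow> i < block_start (Suc j) \<Longrightarrow> even j \<Longrightarrow> x \<in> C j \<Longrightarrow> y \<in> C j \<Longrightarrow>
      dist ((f ^^ Q i) x) ((f ^^ Q i) y) < 1 / (real j + 1)"
    "\<And>j i x. block_start j \<le> i \<Longrightarrow> i < block_start (Suc j) \<Longrightarrow> odd j \<Longrightarrow> x \<in> C j \<Longrightarrow>
      dist ((f ^^ Q i) x) x < 1 / (real j + 1)"
proof -
  obtain C :: "nat \<Rightarrow> 'a set" where C: "\<And>i. C i \<subseteq> C (Suc i)" "A = (\<Union>i. C i)"
    and C_prox_rigid: "\<And>i. uniformly_proximal f (C i) \<and> uniformly_rigid f (C i)"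
    using assms unfolding uniformly_chaotic_def by blast
  define good where "good j m \<longleftrightarrow>
    (if even j then \<forall>x\<in>C j. \<forall>y\<in>C j. dist ((f ^^ m) x) ((f ^^ m) y) < 1 / (real j + 1)
     else \<forall>x\<in>C j. dist ((f ^^ m) x) x < 1 / (real j + 1))" for j m
  have "\<exists>m>M. good j m" for j M
  proof (cases "even j")
    case True
    then show ?thesis unfolding good_def
      using uniformly_proximal_arbitrarily_large_times[OF conjunct1[OF C_prox_rigid[of j]], of "1 / (real j + 1)" M]
      by simp
  next
    case False
    then show ?thesis unfolding good_def
      using uniformly_rigid_arbitrarily_large_times[OF conjunct2[OF C_prox_rigid[of j]], of "1 / (real j + 1)" M]
      by simp
  qed
  then obtain Q where "strict_mono Q" "\<forall>i. 0 < Q i"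
    and Q_good: "\<And>j i. block_start j \<le> i \<Longrightarrow> i < block_start (Suc j) \<Longrightarrow> good j (Q i)"
    using strict_mono_sequence_in_blocks[OF strict_mono_block_start] by metis
  show thesis
  proof (rule that[OF C \<open>strict_mono Q\<close> \<open>\<forall>i. 0 < Q i\<close>])
    show "dist ((f ^^ Q i) x) ((f ^^ Q i) y) < 1 / (real j + 1)"
      if "block_start j \<le> i" "i < block_start (Suc j)" "even j" "x \<in> C j" "y \<in> C j" for j i x y
      using Q_good[OF that(1,2)] that(3-5) unfolding good_def by simp
    show "dist ((f ^^ Q i) x) x < 1 / (real j + 1)"
      if "block_start j \<le> i" "i < block_start (Suc j)" "odd j" "x \<in> C j" for j i x
      using Q_good[OF that(1,2)] that(3,4) unfolding good_def by simp
  qed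
qed

theorem theorem4p2:
  fixes X :: "'a::metric_space set" and f :: "'a \<Rightarrow> 'a" and A :: "'a set"
  assumes "compact X"
    and "continuous_on X f"
    and "f ` X \<subseteq> X"
    and "A \<subseteq> X"
    and "uniformly_chaotic f A"
  shows "\<exists>Q :: nat \<Rightarrow> nat. strict_mono Q \<and> (\<forall>i. Q i > 0) \<and> distributional_chaotic_set f Q A"
proof -
  obtain C Q where C_mono: "\<And>i. C i \<subseteq> C (Suc i)" and A_eq: "A = (\<Union>i. C i)"
    and "strict_mono Q" "\<forall>i. 0 < Q i"
    and proximal: "\<And>j i x y. block_start j \<le> i \<Longrightarrow> i < block_start (Suc j) \<Longrightarrow> even j \<Longrightarrow>
      x \<in> C j \<Longrightarrow> y \<in> C j \<Longrightarrow> dist ((f ^^ Q i) x) ((f ^^ Q i) y) < 1 / (real j + 1)"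
    and rigid: "\<And>j i x. block_start j \<le> i \<Longrightarrow> i < block_start (Suc j) \<Longrightarrow> odd j \<Longrightarrow>
      x \<in> C j \<Longrightarrow> dist ((f ^^ Q i) x) x < 1 / (real j + 1)"
    using uniformly_chaotic_blockwise_sequence[OF assms(5)] by blast
  have "distributional_scrambled_pair f Q x y" if "x \<in> A" "y \<in> A" "x \<noteq> y" for x y
  proof -
    obtain i1 i2 where "x \<in> C i1" "y \<in> C i2" using \<open>x \<in> A\<close> \<open>y \<in> A\<close> A_eq by blast
    then have in_C: "x \<in> C j" "y \<in> C j" if "max i1 i2 \<le> j" for j
      using lift_Suc_mono_le[of C, OF C_mono] that by (meson max.bounded_iff subsetD)+
    show ?thesis
    proof (rule distributional_scrambled_pair_if_blockwise_proximal_rigid[OF _ _ \<open>x \<noteq> y\<close>])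
      fix j i assume "max i1 i2 \<le> j" "even j" "block_start j \<le> i" "i < block_start (Suc j)"
      then show "dist ((f ^^ Q i) x) ((f ^^ Q i) y) < 1 / (real j + 1)"
        using proximal in_C by blast
    next
      fix j i assume "max i1 i2 \<le> j" "odd j" "block_start j \<le> i" "i < block_start (Suc j)"
      then show "dist ((f ^^ Q i) x) x < 1 / (real j + 1) \<and> dist ((f ^^ Q i) y) y < 1 / (real j + 1)"
        using rigid in_C by blast
    qed
  qed
  then show ?thesis using \<open>strict_mono Q\<close> \<open>\<forall>i. 0 < Q i\<close> unfolding distributional_chaotic_set_def by blast
qed

end
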